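(* Let $\ell,m$ be positive integers and let $S(\ell,m)$ be the $(\ell+m)\times(\ell+m)$ coloring matrix whose first $\ell$ rows consist entirely of ones and whose remaining $m$ rows consist entirely of zeroes. Then for all $n>1$, $$t_{S(\ell,m)}(n)=\sum_{k=1}^{n-1}N_{n-1,k}\,\ell^{n-k}(\ell+m)^k=\sum_{k=1}^{n-1}\frac{1}{n-1}\binom{n-1}{k}\binom{n-1}{k-1}\ell^{n-k}(\ell+m)^k.$$
   Context: A plane tree is an unlabeled rooted tree in which the children of every vertex are linearly ordered. A coloring matrix is a square matrix $A=(a_{ij})$ with entries in $\{0,1\}$. An $A$-coloring of a plane tree assigns to each vertex a color (an index of a row of $A$) such that whenever a vertex of color $j$ is a child of a vertex of color $i$, $a_{ij}=1$. Let $t_A(n)$ be the number of pairs (plane tree with $n$ vertices, $A$-coloring of it). $N_{n,k}=\frac1n\binom{n}{k}\binom{n}{k-1}$ denotes the Narayana numbers. *)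

theory Defs
  imports Complex_Main
begin

text \<open>Plane trees whose vertices carry a label (here: a colour).  A pair
(plane tree, colouring of its vertices) is exactly such a labelled plane tree:
the children of each vertex are linearly ordered by the list.\<close>
datatype 'a ltree = LNode 'a "'a ltree list"

fun lroot :: "'a ltree \<Rightarrow> 'a" where
  "lroot (LNode a ts) = a"

fun nverts :: "'a ltree \<Rightarrow> nat" where
  "nverts (LNode a ts) = Suc (sum_list (map nverts ts))"

text \<open>A coloring matrix of size d is given by its entries a i j (i, j < d),
with True meaning 1 and False meaning 0.  Colours are 0, ..., d-1.\<close>
fun is_A_coloring :: "(nat \<Rightarrow> nat \<Rightarrow> bool) \<Rightarrow> nat \<Rightarrow> nat ltree \<Rightarrow> bool" where
  "is_A_coloring a d (LNode c ts) =
     (c < d \<and> (\<forall>t\<in>set ts. a c (lroot t) \<and> is_A_coloring a d t))"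

definition tA :: "(nat \<Rightarrow> nat \<Rightarrow> bool) \<Rightarrow> nat \<Rightarrow> nat \<Rightarrow> nat" where
  "tA a d n = card {T. nverts T = n \<and> is_A_coloring a d T}"

definition S_matrix :: "nat \<Rightarrow> nat \<Rightarrow> nat \<Rightarrow> bool" where
  "S_matrix l i j = (i < l)"

definition narayana :: "nat \<Rightarrow> nat \<Rightarrow> real" where
  "narayana n k = (1 / real n) * real (n choose k) * real (n choose (k - 1))"

end

theory Submission imports Defs begin

text \<open>A tree is coloured according to S(l,m) iff every internal vertex gets one of the l
colours with a row of ones and every leaf gets any of the l+m colours.  Hence t(n) is the
generating polynomial of plane trees with n vertices in which internal vertices have weight
x = l and leaves weight y = l+m.  We generalise to plane forests of r trees: splitting off
the root of the first tree gives a recurrence in (n, r), which we bring into three-term form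
and which is also satisfied by an explicit polynomial whose coefficients are 2 \<times> 2
determinants of binomial coefficients.  For a single tree these determinants are the
Narayana numbers.\<close>

fun binom_det :: "nat \<Rightarrow> nat \<Rightarrow> nat \<Rightarrow> real" where
  "binom_det a b 0 = 0"
| "binom_det a b (Suc j) =
     real (a choose Suc j) * real (b choose j) - real (a choose j) * real (b choose Suc j)"

lemma binom_det_Suc_Suc:
  "binom_det (Suc a) (Suc b) i
     = binom_det (Suc a) b i + binom_det a (Suc b) i + binom_det a b (i - 1) - binom_det a b i"
  by (cases i; cases "i - 1") (auto simp: algebra_simps)

lemma binom_det_eq_0: "Suc (Suc a) \<le> i \<Longrightarrow> binom_det a b i = 0"
  by (cases i) (auto simp: binomial_eq_0)

lemma binom_det_diag: "binom_det a a i = 0"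
  by (cases i) auto

lemma binom_det_right_0: "binom_det a 0 i = (if i = 1 then real a else 0)"
  by (cases i) auto

lemma binom_det_narayana:
  assumes "1 \<le> i" "i \<le> a"
  shows "binom_det a (a - 1) i = narayana a (Suc a - i)"
proof -
  obtain j where i: "i = Suc j" and "j < a"
    using assms by (cases i) auto
  have absorb: "real (a - k) * real (a choose k) = real a * real ((a - 1) choose k)" for k
    using binomial_absorb_comp[of a k] by (metis of_nat_mult)
  have "real a * binom_det a (a - 1) i
          = real (a choose Suc j) * (real (a - j) * real (a choose j))
            - real (a choose j) * (real (a - Suc j) * real (a choose Suc j))"
    unfolding i absorb by (simp add: algebra_simps)
  also have "\<dots> = real (a choose j) * real (a choose Suc j)"
    using \<open>j < a\<close> by (simp add: algebra_simps)
  finally have "binom_det a (a - 1) i = real (a choose j) * real (a choose Suc j) / real a"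
    using \<open>j < a\<close> by (simp add: field_simps)
  moreover have "a choose (Suc a - i) = a choose j" "a choose (Suc a - i - 1) = a choose Suc j"
    using \<open>j < a\<close> binomial_symmetric[of j a] binomial_symmetric[of "Suc j" a] by (simp_all add: i)
  ultimately show ?thesis
    by (simp add: narayana_def)
qed

definition binom_det_poly :: "nat \<Rightarrow> nat \<Rightarrow> real \<Rightarrow> real \<Rightarrow> nat \<Rightarrow> real" where
  "binom_det_poly a b x y n = (\<Sum>i\<le>n. binom_det a b i * x ^ i * y ^ (n - i))"

lemma binom_det_poly_right_0:
  assumes "1 \<le> n"
  shows "binom_det_poly a 0 x y n = real a * x * y ^ (n - 1)"
proof -
  have "binom_det_poly a 0 x y n = (\<Sum>i\<le>n. if i = 1 then real a * x * y ^ (n - 1) else 0)"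
    unfolding binom_det_poly_def by (intro sum.cong) (auto simp: binom_det_right_0)
  then show ?thesis
    using assms by simp
qed

lemma binom_det_poly_Suc_degree:
  assumes "Suc a \<le> n"
  shows "y * binom_det_poly a b x y n = binom_det_poly a b x y (Suc n)"
proof -
  have "y * binom_det_poly a b x y n = (\<Sum>i\<le>n. binom_det a b i * x ^ i * y ^ (Suc n - i))"
    unfolding binom_det_poly_def sum_distrib_left by (intro sum.cong) (simp_all add: Suc_diff_le)
  also have "\<dots> = binom_det_poly a b x y (Suc n)"
    using binom_det_eq_0[of a "Suc n" b] assms by (simp add: binom_det_poly_def)
  finally show ?thesis .
qed

lemma binom_det_poly_times_x:
  "x * binom_det_poly a b x y n = (\<Sum>i\<le>Suc n. binom_det a b (i - 1) * x ^ i * y ^ (Suc n - i))"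
proof -
  have "(\<Sum>i\<le>Suc n. binom_det a b (i - 1) * x ^ i * y ^ (Suc n - i))
          = (\<Sum>i<Suc n. binom_det a b i * x ^ Suc i * y ^ (n - i))"
    by (subst sum.atMost_shift) simp
  then show ?thesis
    by (simp add: binom_det_poly_def sum_distrib_left lessThan_Suc_atMost algebra_simps)
qed

lemma binom_det_poly_Suc_Suc:
  assumes "Suc a \<le> n"
  shows "binom_det_poly (Suc a) (Suc b) x y (Suc n)
           = binom_det_poly (Suc a) b x y (Suc n) + y * binom_det_poly a (Suc b) x y n
             + (x - y) * binom_det_poly a b x y n"
proof -
  have "binom_det_poly (Suc a) (Suc b) x y (Suc n)
          = binom_det_poly (Suc a) b x y (Suc n) + binom_det_poly a (Suc b) x y (Suc n)
            + (\<Sum>i\<le>Suc n. binom_det a b (i - 1) * x ^ i * y ^ (Suc n - i))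
            - binom_det_poly a b x y (Suc n)"
    by (simp add: binom_det_poly_def binom_det_Suc_Suc[of a b] algebra_simps
        sum.distrib sum_subtractf)
  then show ?thesis
    using assms by (simp add: binom_det_poly_Suc_degree binom_det_poly_times_x algebra_simps)
qed

text \<open>The generating polynomial of plane forests with r trees and n vertices, x marking
internal vertices and y leaves.\<close>
definition forest_poly :: "real \<Rightarrow> real \<Rightarrow> nat \<Rightarrow> nat \<Rightarrow> real" where
  "forest_poly x y n r =
     (if n < r then 0 else if r = n then y ^ n else binom_det_poly (n - 1) (n - r - 1) x y n)"

lemma forest_poly_Suc_Suc:
  "forest_poly x y (Suc n) (Suc r)
     = forest_poly x y (Suc n) (Suc (Suc r)) + y * forest_poly x y n r
       + (x - y) * forest_poly x y n (Suc r)"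
proof -
  have "n < r \<or> n = r \<or> n = Suc r \<or> (\<exists>b. n = Suc (Suc (r + b)))"
    by presburger
  then consider "n < r" | "n = r" | "n = Suc r" | b where "n = Suc (Suc (r + b))"
    by blast
  then show ?thesis
  proof cases
    case 3
    have "forest_poly x y (Suc (Suc r)) (Suc r) = real (Suc r) * x * y ^ Suc r"
      using binom_det_poly_right_0[of "Suc (Suc r)" "Suc r" x y] by (simp add: forest_poly_def)
    moreover have "forest_poly x y (Suc r) r = real r * x * y ^ r"
      using binom_det_poly_right_0[of "Suc r" r x y] by (simp add: forest_poly_def)
    ultimately show ?thesis
      by (simp add: 3 forest_poly_def algebra_simps)
  next
    case (4 b)
    then show ?thesis
      using binom_det_poly_Suc_Suc[of "Suc (r + b)" n b x y] by (simp add: forest_poly_def)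
  qed (simp_all add: forest_poly_def)
qed

lemma forest_poly_one_tree:
  assumes "n > 1"
  shows "forest_poly x y n 1 = (\<Sum>k=1..n-1. narayana (n - 1) k * x ^ (n - k) * y ^ k)"
proof -
  obtain a where n: "n = Suc a" and "a \<ge> 1"
    using assms by (cases n) auto
  have "forest_poly x y n 1 = (\<Sum>i\<le>n. binom_det a (a - 1) i * x ^ i * y ^ (n - i))"
    using assms n by (simp add: forest_poly_def binom_det_poly_def)
  also have "\<dots> = (\<Sum>i=1..a. binom_det a (a - 1) i * x ^ i * y ^ (n - i))"
  proof (rule sum.mono_neutral_right)
    show "\<forall>i\<in>{..n} - {1..a}. binom_det a (a - 1) i * x ^ i * y ^ (n - i) = 0"
    proof
      fix i
      assume "i \<in> {..n} - {1..a}"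
      then consider "i = 0" | "i = Suc a"
        using n by force
      then show "binom_det a (a - 1) i * x ^ i * y ^ (n - i) = 0"
        using \<open>a \<ge> 1\<close> by cases (simp_all add: binomial_eq_0)
    qed
  qed (auto simp: n)
  also have "\<dots> = (\<Sum>i=1..a. narayana a (Suc a - i) * x ^ i * y ^ (Suc a - i))"
    using binom_det_narayana[of _ a] by (intro sum.cong) (auto simp: n)
  also have "\<dots> = (\<Sum>k=1..a. narayana a k * x ^ (Suc a - k) * y ^ k)"
    by (subst sum.atLeastAtMost_rev) (auto intro!: sum.cong simp: Suc_diff_le)
  finally show ?thesis
    by (simp add: n)
qed

definition colored_forests :: "(nat \<Rightarrow> nat \<Rightarrow> bool) \<Rightarrow> nat \<Rightarrow> nat \<Rightarrow> nat \<Rightarrow> nat ltree list set" where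
  "colored_forests a d n r =
     {ts. length ts = r \<and> sum_list (map nverts ts) = n \<and> (\<forall>t\<in>set ts. is_A_coloring a d t)}"

lemma card_colored_forests_1: "card (colored_forests a d n 1) = tA a d n"
proof -
  have "colored_forests a d n 1 = (\<lambda>t. [t]) ` {t. nverts t = n \<and> is_A_coloring a d t}"
    by (auto simp: colored_forests_def length_Suc_conv)
  then show ?thesis
    by (simp add: tA_def card_image inj_on_def)
qed

lemma nverts_ge_1: "1 \<le> nverts t"
  by (cases t) auto

lemma length_le_sum_nverts: "length ts \<le> sum_list (map nverts ts)"
proof (induction ts)
  case (Cons t ts)
  then show ?case
    using nverts_ge_1[of t] by simp
qed simp

lemma colored_forests_eq_empty: "n < r \<Longrightarrow> colored_forests a d n r = {}"
  using length_le_sum_nverts by (auto simp: colored_forests_def not_less[symmetric])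

lemma colored_forests_0: "colored_forests a d 0 r = (if r = 0 then {[]} else {})"
  using colored_forests_eq_empty[of 0 r] by (auto simp: colored_forests_def)

lemma colored_forests_Suc_0: "colored_forests a d (Suc n) 0 = {}"
  by (auto simp: colored_forests_def)

abbreviation S_forests :: "nat \<Rightarrow> nat \<Rightarrow> nat \<Rightarrow> nat \<Rightarrow> nat ltree list set" where
  "S_forests l m \<equiv> colored_forests (S_matrix l) (l + m)"

definition root_colours :: "nat \<Rightarrow> nat \<Rightarrow> nat \<Rightarrow> nat set" where
  "root_colours l m k = {..<(if k = 0 then l + m else l)}"

lemma is_S_coloring_LNode:
  "is_A_coloring (S_matrix l) (l + m) (LNode c ts)
     \<longleftrightarrow> c \<in> root_colours l m (length ts) \<and> (\<forall>t\<in>set ts. is_A_coloring (S_matrix l) (l + m) t)"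
  by (cases ts) (auto simp: root_colours_def S_matrix_def)

fun plant :: "nat \<Rightarrow> nat \<times> nat ltree list \<Rightarrow> nat ltree list" where
  "plant k (c, ts) = LNode c (take k ts) # drop k ts"

lemma inj_plant: "inj (plant k)"
proof (rule injI)
  fix p q
  assume "plant k p = plant k q"
  then show "p = q"
    by (cases p; cases q) (metis append_take_drop_id list.inject ltree.inject plant.simps)
qed

lemma S_forests_Suc_Suc:
  "S_forests l m (Suc n) (Suc r)
     = (\<Union>k\<le>n. plant k ` (root_colours l m k \<times> S_forests l m n (r + k)))"
proof (intro equalityI subsetI)
  fix ts
  assume ts_in: "ts \<in> S_forests l m (Suc n) (Suc r)"
  then obtain t rest where "ts = t # rest"
    by (cases ts) (auto simp: colored_forests_def)
  moreover obtain c cs where "t = LNode c cs"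
    by (cases t)
  ultimately have ts: "ts = LNode c cs # rest"
    by simp
  have in_forests: "(c, cs @ rest) \<in> root_colours l m (length cs) \<times> S_forests l m n (r + length cs)"
    using ts_in by (auto simp: ts colored_forests_def is_S_coloring_LNode simp del: is_A_coloring.simps)
  moreover have "length cs \<le> n"
    using in_forests length_le_sum_nverts[of "cs @ rest"] by (simp add: colored_forests_def)
  ultimately show "ts \<in> (\<Union>k\<le>n. plant k ` (root_colours l m k \<times> S_forests l m n (r + k)))"
    by (intro UN_I[of "length cs"] image_eqI[of _ _ "(c, cs @ rest)"]) (auto simp: ts)
next
  fix ts
  assume "ts \<in> (\<Union>k\<le>n. plant k ` (root_colours l m k \<times> S_forests l m n (r + k)))"
  then obtain k c F where ts: "ts = plant k (c, F)" and c: "c \<in> root_colours l m k"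
    and F: "F \<in> S_forests l m n (r + k)"
    by blast
  have "sum_list (map nverts (take k F)) + sum_list (map nverts (drop k F)) = n"
    using F by (simp add: colored_forests_def flip: sum_list_append map_append)
  then show "ts \<in> S_forests l m (Suc n) (Suc r)"
    using c F by (auto simp: ts colored_forests_def is_S_coloring_LNode simp del: is_A_coloring.simps
        dest: in_set_takeD in_set_dropD)
qed

lemma finite_S_forests: "finite (S_forests l m n r)"
proof (induction n arbitrary: r)
  case (Suc n)
  then show ?case
    by (cases r) (auto simp: colored_forests_Suc_0 S_forests_Suc_Suc root_colours_def)
qed (simp add: colored_forests_0)

lemma card_S_forests_Suc_Suc:
  "card (S_forests l m (Suc n) (Suc r))
     = (\<Sum>k\<le>n. card (root_colours l m k) * card (S_forests l m n (r + k)))"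
proof -
  let ?A = "\<lambda>k. root_colours l m k \<times> S_forests l m n (r + k)"
  have disjoint: "plant j ` ?A j \<inter> plant k ` ?A k = {}" if "j \<noteq> k" for j k
  proof -
    have "plant j (c, F) \<noteq> plant k (c', F')"
      if "F \<in> S_forests l m n (r + j)" "F' \<in> S_forests l m n (r + k)" for c c' F F'
    proof
      assume "plant j (c, F) = plant k (c', F')"
      then have "length (take j F) = length (take k F')"
        by simp
      with that \<open>j \<noteq> k\<close> show False
        by (simp add: colored_forests_def)
    qed
    then show ?thesis
      by blast
  qed
  have "card (S_forests l m (Suc n) (Suc r)) = (\<Sum>k\<le>n. card (plant k ` ?A k))"
    unfolding S_forests_Suc_Suc
    using disjoint by (intro card_UN_disjoint) (auto simp: root_colours_def finite_S_forests)
  also have "\<dots> = (\<Sum>k\<le>n. card (?A k))"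
    by (simp add: card_image inj_on_subset[OF inj_plant])
  finally show ?thesis
    by (simp add: card_cartesian_product)
qed

definition S_forest_count :: "nat \<Rightarrow> nat \<Rightarrow> nat \<Rightarrow> nat \<Rightarrow> real" where
  "S_forest_count l m n r = real (card (S_forests l m n r))"

lemma S_forest_count_eq_0: "n < r \<Longrightarrow> S_forest_count l m n r = 0"
  by (simp add: S_forest_count_def colored_forests_eq_empty)

lemma S_forest_count_Suc_Suc:
  "S_forest_count l m (Suc n) (Suc r)
     = real (l + m) * S_forest_count l m n r + real l * (\<Sum>k<n. S_forest_count l m n (r + Suc k))"
proof -
  have "S_forest_count l m (Suc n) (Suc r)
          = (\<Sum>k\<le>n. real (card (root_colours l m k)) * S_forest_count l m n (r + k))"
    by (simp add: S_forest_count_def card_S_forests_Suc_Suc)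
  also have "\<dots> = real (l + m) * S_forest_count l m n r
                   + (\<Sum>k<n. real l * S_forest_count l m n (r + Suc k))"
    by (subst sum.atMost_shift) (simp add: root_colours_def)
  finally show ?thesis
    by (simp add: sum_distrib_left)
qed

text \<open>Subtracting the recurrence for r + 1 from the one for r telescopes the sum over k.\<close>
lemma S_forest_count_three_term:
  "S_forest_count l m (Suc n) (Suc r)
     = S_forest_count l m (Suc n) (Suc (Suc r)) + real (l + m) * S_forest_count l m n r
       + (real l - real (l + m)) * S_forest_count l m n (Suc r)"
proof -
  define g where "g k = S_forest_count l m n (r + Suc k)" for k
  have "(\<Sum>k<n. g k) = g 0 + (\<Sum>k<n. g (Suc k))"
    using sum.lessThan_Suc_shift[of g n] S_forest_count_eq_0[of n "r + Suc n"]
    by (simp add: g_def)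
  then show ?thesis
    using S_forest_count_Suc_Suc[of l m n r] S_forest_count_Suc_Suc[of l m n "Suc r"]
    by (simp add: g_def algebra_simps)
qed

lemma S_forest_count_eq_forest_poly:
  "S_forest_count l m n r = forest_poly (real l) (real (l + m)) n r"
proof (induction n arbitrary: r)
  case 0
  show ?case
    by (simp add: S_forest_count_def colored_forests_0 forest_poly_def)
next
  case (Suc n)
  have Suc_r: "S_forest_count l m (Suc n) (Suc r) = forest_poly (real l) (real (l + m)) (Suc n) (Suc r)"
    if "r \<le> Suc n" for r
    using that
  proof (induction r rule: inc_induct)
    case base
    show ?case
      by (simp add: S_forest_count_eq_0 forest_poly_def)
  next
    case (step r)
    then show ?case
      using S_forest_count_three_term[of l m n r] forest_poly_Suc_Suc[of "real l" "real (l + m)" n r]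
        Suc.IH by simp
  qed
  show ?case
  proof (cases r)
    case 0
    then show ?thesis
      by (simp add: S_forest_count_def colored_forests_Suc_0 forest_poly_def binom_det_poly_def
          binom_det_diag)
  next
    case (Suc r')
    then show ?thesis
      using Suc_r[of r'] by (cases "r' \<le> Suc n") (simp_all add: S_forest_count_eq_0 forest_poly_def)
  qed
qed

theorem theorem32:
  fixes l m n :: nat
  assumes "l > 0" and "m > 0" and "n > 1"
  shows "real (tA (S_matrix l) (l + m) n)
           = (\<Sum>k=1..n-1. narayana (n-1) k * real l ^ (n - k) * real (l + m) ^ k)
       \<and> (\<Sum>k=1..n-1. narayana (n-1) k * real l ^ (n - k) * real (l + m) ^ k)
           = (\<Sum>k=1..n-1. (1 / real (n-1)) * real ((n-1) choose k) * real ((n-1) choose (k-1))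
                            * real l ^ (n - k) * real (l + m) ^ k)"
proof
  have "real (tA (S_matrix l) (l + m) n) = S_forest_count l m n 1"
    by (simp only: S_forest_count_def card_colored_forests_1)
  also have "\<dots> = (\<Sum>k=1..n-1. narayana (n-1) k * real l ^ (n - k) * real (l + m) ^ k)"
    using forest_poly_one_tree[OF \<open>n > 1\<close>] by (simp only: S_forest_count_eq_forest_poly)
  finally show "real (tA (S_matrix l) (l + m) n)
                  = (\<Sum>k=1..n-1. narayana (n-1) k * real l ^ (n - k) * real (l + m) ^ k)" .
qed (simp add: narayana_def)

end
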